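(* Let $f$ be smooth and bistable (there is $\alpha\in(0,1)$ with $f(0)=f(\alpha)=f(1)=0$, $f'(0),f'(1)<0<f'(\alpha)$, $f>0$ on $(-\infty,0)\cup(\alpha,1)$, $f<0$ on $(0,\alpha)\cup(1,\infty)$) and $\tau_m=1/\sup_{[0,1]}|f'|$. Set $\delta_+=-f'(1)>0$, $\delta_-=-f'(0)>0$ and $$\chi_0:=\tfrac12\min\{\delta_+,\delta_-\}>0.$$ For $\tau\in(0,\tau_m)$ let $c=c_\ast(\tau)$ be the speed of the traveling wave of $u_t=v_x+f(u)$, $\tau v_t=u_x-v$ connecting $(0,0)$ to $(1,0)$, and $b_\pm=1+\tau\delta_\pm$. Then for all $\tau\in(0,\tau_m)$, every $\xi\in\mathbb{R}$ and every $\lambda\in\mathbb{C}$ satisfying one of the dispersion relations $$\xi^2-ic\xi(b_\pm+2\tau\lambda)+(1-c^2\tau)(\tau\lambda^2+b_\pm\lambda+\delta_\pm)=0$$ satisfies $\mathrm{Re}\,\lambda<-\chi_0<0$.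
   Context: The roots $\lambda=\lambda^\pm_{1,2}(\xi)$ of the dispersion relations describe the algebraic curves on which the constant-coefficient limit systems at $x\to\pm\infty$ have purely imaginary spatial eigenvalues $i\xi$. *)

theory Defs
  imports "HOL-Analysis.Analysis"
begin

definition smooth_fun :: "(real \<Rightarrow> real) \<Rightarrow> bool" where
  "smooth_fun f \<longleftrightarrow> (\<forall>k x. ((deriv ^^ k) f) differentiable (at x))"

definition bistable :: "(real \<Rightarrow> real) \<Rightarrow> real \<Rightarrow> bool" where
  "bistable f \<alpha> \<longleftrightarrow> 0 < \<alpha> \<and> \<alpha> < 1 \<and>
     f 0 = 0 \<and> f \<alpha> = 0 \<and> f 1 = 0 \<and>
     deriv f 0 < 0 \<and> deriv f 1 < 0 \<and> 0 < deriv f \<alpha> \<and>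
     (\<forall>x. (x < 0 \<or> (\<alpha> < x \<and> x < 1)) \<longrightarrow> f x > 0) \<and>
     (\<forall>x. ((0 < x \<and> x < \<alpha>) \<or> 1 < x) \<longrightarrow> f x < 0)"

definition tau_m :: "(real \<Rightarrow> real) \<Rightarrow> real" where
  "tau_m f = 1 / (SUP x\<in>{0..1}. \<bar>deriv f x\<bar>)"

text \<open>c is the speed of a traveling wave u(x,t) = U(x - c t), v(x,t) = V(x - c t) of
  u_t = v_x + f(u), tau v_t = u_x - v with (U,V) tending to (0,0) at minus infinity
  and to (1,0) at plus infinity.\<close>
definition tw_speed :: "(real \<Rightarrow> real) \<Rightarrow> real \<Rightarrow> real \<Rightarrow> bool" where
  "tw_speed f \<tau> c \<longleftrightarrow> (\<exists>U V :: real \<Rightarrow> real.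
     (\<forall>z. U differentiable (at z) \<and> V differentiable (at z)) \<and>
     (\<forall>z. - c * deriv U z = deriv V z + f (U z)) \<and>
     (\<forall>z. - c * \<tau> * deriv V z = deriv U z - V z) \<and>
     (U \<longlongrightarrow> 0) at_bot \<and> (V \<longlongrightarrow> 0) at_bot \<and>
     (U \<longlongrightarrow> 1) at_top \<and> (V \<longlongrightarrow> 0) at_top)"

definition dispersion :: "real \<Rightarrow> real \<Rightarrow> real \<Rightarrow> real \<Rightarrow> complex \<Rightarrow> bool" where
  "dispersion \<tau> c \<delta> \<xi> lam \<longleftrightarrow>
     (let b = 1 + \<tau> * \<delta> in
      complex_of_real (\<xi>^2) - \<i> * complex_of_real (c * \<xi>) * (complex_of_real b + 2 * complex_of_real \<tau> * lam)
      + complex_of_real (1 - c^2 * \<tau>) * (complex_of_real \<tau> * lam^2 + complex_of_real b * lam + complex_of_real \<delta>) = 0)"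

end

(*
  Splitting the dispersion relation into real and imaginary parts, with x = Re lam, either
  x = -(1 + tau delta)/(2 tau), or, after eliminating Im lam,
  (1 - c^2 tau)^2 (tau x + 1)(x + delta) = - xi^2; since tau delta < 1 this forces
  x <= max(-delta, -1/tau) < -delta/2.  The substance is that 1 - c^2 tau cannot vanish:
  at the critical speed c^2 tau = 1 the wave equations collapse to U' (c^2 - f'(U)) = - c f(U),
  and since c^2 = 1/tau > f'(alpha) the zero alpha of f is a regular equilibrium of this
  scalar equation.  By a Gronwall argument a profile reaching alpha would then be constant,
  contradicting its limits 0 and 1.
*)
theory Submission
  imports Defs
begin

lemma dispersion_Re_less:
  assumes disp: "dispersion \<tau> c \<delta> \<xi> lam"
    and "0 < \<tau>" "0 < \<delta>" "\<tau> * \<delta> < 2" "c\<^sup>2 * \<tau> \<noteq> 1"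
  shows "Re lam < - (\<delta> / 2)"
proof -
  define x y where "x = Re lam" and "y = Im lam"
  define a b where "a = 1 - c\<^sup>2 * \<tau>" and "b = 1 + \<tau> * \<delta>"
  have eq: "of_real (\<xi>\<^sup>2) - \<i> * of_real (c * \<xi>) * (of_real b + 2 * of_real \<tau> * Complex x y)
      + of_real a * (of_real \<tau> * (Complex x y)\<^sup>2 + of_real b * Complex x y + of_real \<delta>) = 0"
    using disp unfolding dispersion_def Let_def a_def b_def x_def y_def by simp
  have re: "\<xi>\<^sup>2 + 2 * \<tau> * c * \<xi> * y + a * (\<tau> * (x\<^sup>2 - y\<^sup>2) + b * x + \<delta>) = 0"
    using arg_cong[OF eq, of Re] by (simp add: power2_eq_square algebra_simps)
  have im: "(b + 2 * \<tau> * x) * (a * y - c * \<xi>) = 0"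
    using arg_cong[OF eq, of Im] by (simp add: power2_eq_square algebra_simps)
  show ?thesis
  proof (cases "b + 2 * \<tau> * x = 0")
    case True
    then have "x = - 1 / (2 * \<tau>) - \<delta> / 2"
      using \<open>0 < \<tau>\<close> by (simp add: b_def field_simps)
    with \<open>0 < \<tau>\<close> show ?thesis by (simp add: x_def)
  next
    case False
    with im have ay: "a * y = c * \<xi>" by simp
    \<comment> \<open>Multiply the real part by a and eliminate y; a + c^2 \<tau> = 1 leaves a square.\<close>
    have "a\<^sup>2 * ((\<tau> * x + 1) * (x + \<delta>)) = - \<xi>\<^sup>2"
    proof -
      have "a * (\<xi>\<^sup>2 + 2 * \<tau> * c * \<xi> * y + a * (\<tau> * (x\<^sup>2 - y\<^sup>2) + b * x + \<delta>)) = 0"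
        using re by simp
      then have "a * \<xi>\<^sup>2 + \<tau> * (c * \<xi>) * (2 * (a * y)) - \<tau> * (a * y)\<^sup>2
          + a\<^sup>2 * ((\<tau> * x + 1) * (x + \<delta>)) = 0"
        by (simp add: b_def algebra_simps power2_eq_square)
      then have "(a + c\<^sup>2 * \<tau>) * \<xi>\<^sup>2 + a\<^sup>2 * ((\<tau> * x + 1) * (x + \<delta>)) = 0"
        unfolding ay by (simp add: algebra_simps power2_eq_square)
      then show ?thesis by (simp add: a_def)
    qed
    moreover have "a\<^sup>2 > 0"
      using \<open>c\<^sup>2 * \<tau> \<noteq> 1\<close> by (simp add: a_def)
    ultimately have "(\<tau> * x + 1) * (x + \<delta>) \<le> 0"
      by (smt (verit) mult_pos_pos zero_le_power2)
    moreover have "(\<tau> * x + 1) * (x + \<delta>) > 0" if "x \<ge> - (\<delta> / 2)"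
    proof -
      have "\<tau> * x \<ge> - (\<tau> * \<delta> / 2)"
        using mult_left_mono[OF that, of \<tau>] \<open>0 < \<tau>\<close> by simp
      with that \<open>0 < \<delta>\<close> \<open>\<tau> * \<delta> < 2\<close> show ?thesis by simp
    qed
    ultimately have "x < - (\<delta> / 2)" by (meson not_le)
    then show ?thesis by (simp add: x_def)
  qed
qed

lemma linear_bound_zero_forward:
  fixes w w' :: "real \<Rightarrow> real"
  assumes "a \<le> b" "w a = 0"
    and deriv: "\<And>s. a \<le> s \<Longrightarrow> s \<le> b \<Longrightarrow> (w has_real_derivative w' s) (at s)"
    and bound: "\<And>s. a \<le> s \<Longrightarrow> s \<le> b \<Longrightarrow> \<bar>w' s\<bar> \<le> L * \<bar>w s\<bar>"
  shows "w b = 0"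
proof -
  define h where "h s = exp (- (2 * L * s)) * (w s)\<^sup>2" for s
  have "h b \<le> h a"
  proof (rule DERIV_nonpos_imp_nonincreasing[OF \<open>a \<le> b\<close>])
    fix s assume s: "a \<le> s" "s \<le> b"
    have hd: "(h has_real_derivative exp (- (2 * L * s)) * (2 * (w s * w' s - L * (w s)\<^sup>2))) (at s)"
      unfolding h_def
      by (rule derivative_eq_intros deriv[OF s] refl | simp)+ (simp add: algebra_simps)
    have "w s * w' s \<le> L * (w s)\<^sup>2"
    proof -
      have "w s * w' s \<le> \<bar>w s\<bar> * \<bar>w' s\<bar>" by (simp add: abs_mult[symmetric])
      also have "\<dots> \<le> \<bar>w s\<bar> * (L * \<bar>w s\<bar>)" using bound[OF s] by (simp add: mult_left_mono)
      also have "\<dots> = L * (w s)\<^sup>2" by (simp add: power2_eq_square)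
      finally show ?thesis .
    qed
    then have "exp (- (2 * L * s)) * (2 * (w s * w' s - L * (w s)\<^sup>2)) \<le> 0"
      by (simp add: mult_nonneg_nonpos)
    with hd show "\<exists>y. (h has_real_derivative y) (at s) \<and> y \<le> 0" by blast
  qed
  then have "(w b)\<^sup>2 \<le> 0"
    using \<open>w a = 0\<close> by (simp add: h_def mult_le_0_iff)
  then show ?thesis by simp
qed

lemma linear_bound_zero_between:
  fixes w w' :: "real \<Rightarrow> real"
  assumes "w a = 0"
    and deriv: "\<And>s. s \<in> closed_segment a b \<Longrightarrow> (w has_real_derivative w' s) (at s)"
    and bound: "\<And>s. s \<in> closed_segment a b \<Longrightarrow> \<bar>w' s\<bar> \<le> L * \<bar>w s\<bar>"
  shows "w b = 0"
proof (cases "a \<le> b")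
  case True
  then show ?thesis
    using linear_bound_zero_forward[of a b w w' L] assms by (simp add: closed_segment_eq_real_ivl)
next
  case False
  have "(\<lambda>s. w (- s)) (- b) = 0"
  proof (rule linear_bound_zero_forward[where w = "\<lambda>s. w (- s)" and w' = "\<lambda>s. - w' (- s)"
      and a = "- a" and b = "- b"])
    fix s assume s: "- a \<le> s" "s \<le> - b"
    then have seg: "- s \<in> closed_segment a b"
      using False by (simp add: closed_segment_eq_real_ivl)
    show "((\<lambda>s. w (- s)) has_real_derivative - w' (- s)) (at s)"
    proof -
      have "((\<lambda>s. - s) has_real_derivative - 1) (at s)"
        by (auto intro!: derivative_eq_intros)
      from DERIV_chain2[OF _ this] show ?thesis using deriv[OF seg] by simp
    qed
    show "\<bar>- w' (- s)\<bar> \<le> L * \<bar>w (- s)\<bar>" using bound[OF seg] by simp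
  qed (use False \<open>w a = 0\<close> in auto)
  then show ?thesis by simp
qed

lemma linear_bound_zero_everywhere:
  fixes w w' :: "real \<Rightarrow> real"
  assumes deriv: "\<And>z. (w has_real_derivative w' z) (at z)"
    and "w z0 = 0" "0 < r"
    and bound: "\<And>z. \<bar>w z\<bar> < r \<Longrightarrow> \<bar>w' z\<bar> \<le> L * \<bar>w z\<bar>"
  shows "w z = 0"
proof -
  have cont: "isCont w z" for z
    using deriv DERIV_isCont by blast
  have "closed {z. w z = 0}"
    using cont by (intro closed_Collect_eq) (auto intro: continuous_at_imp_continuous_on)
  moreover have "open {z. w z = 0}"
    unfolding open_contains_ball
  proof safe
    fix z assume "w z = 0"
    obtain e where "e > 0" and e: "\<And>s. dist s z < e \<Longrightarrow> dist (w s) (w z) < r"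
      using cont[of z] \<open>0 < r\<close> unfolding continuous_at_eps_delta by blast
    have "w t = 0" if "t \<in> ball z e" for t
    proof (rule linear_bound_zero_between[OF \<open>w z = 0\<close> deriv bound])
      fix s assume "s \<in> closed_segment z t"
      moreover have "closed_segment z t \<subseteq> ball z e"
        using \<open>e > 0\<close> that by (intro closed_segment_subset) auto
      ultimately have "dist s z < e"
        by (auto simp: dist_commute)
      then show "\<bar>w s\<bar> < r"
        using e[of s] \<open>w z = 0\<close> by (simp add: dist_real_def)
    qed
    with \<open>e > 0\<close> show "\<exists>e>0. ball z e \<subseteq> {z. w z = 0}" by blast
  qed
  ultimately have "{z. w z = 0} = UNIV"
    using clopen[of "{z. w z = 0}"] \<open>w z0 = 0\<close> by auto
  then show ?thesis by auto
qed

lemma smooth_fun_has_real_derivative: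
  "smooth_fun f \<Longrightarrow> (f has_real_derivative deriv f x) (at x)"
  unfolding smooth_fun_def DERIV_deriv_iff_real_differentiable by (metis funpow_0)

lemma smooth_fun_isCont_deriv:
  assumes "smooth_fun f"
  shows "isCont (deriv f) x"
proof -
  have "(deriv ^^ 1) f differentiable (at x)"
    using assms unfolding smooth_fun_def by blast
  then show ?thesis by (simp add: differentiable_imp_continuous_within)
qed

lemma tw_profile_critical_speed:
  assumes Df: "\<And>x. (f has_real_derivative deriv f x) (at x)"
    and DU: "\<And>z. (U has_real_derivative deriv U z) (at z)"
    and eqU: "\<And>z. - c * deriv U z = deriv V z + f (U z)"
    and eqV: "\<And>z. - c * \<tau> * deriv V z = deriv U z - V z"
    and "c\<^sup>2 * \<tau> = 1"
  shows "deriv U z * (c\<^sup>2 - deriv f (U z)) = - c * f (U z)"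
proof -
  have "c \<noteq> 0" using \<open>c\<^sup>2 * \<tau> = 1\<close> by auto
  have "c * V z = - f (U z)" for z
  proof -
    have "c * (- c * \<tau> * deriv V z) = c * (deriv U z - V z)"
      using eqV by simp
    then have "- deriv V z = c * deriv U z - c * V z"
      using \<open>c\<^sup>2 * \<tau> = 1\<close> by (simp add: algebra_simps power2_eq_square)
    then show ?thesis using eqU[of z] by (simp add: algebra_simps)
  qed
  then have V: "V = (\<lambda>z. - f (U z) / c)"
    using \<open>c \<noteq> 0\<close> by (auto simp: field_simps)
  have "((\<lambda>z. - f (U z) / c) has_real_derivative - (deriv f (U z) * deriv U z) / c) (at z)"
    using \<open>c \<noteq> 0\<close> by (auto intro!: derivative_eq_intros DERIV_chain2[OF Df DU])
  then have "deriv V z = - (deriv f (U z) * deriv U z) / c"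
    unfolding V by (rule DERIV_imp_deriv)
  with eqU[of z] \<open>c \<noteq> 0\<close> show ?thesis
    by (simp add: field_simps power2_eq_square)
qed

lemma profile_constant_at_regular_equilibrium:
  fixes f U :: "real \<Rightarrow> real"
  assumes Df: "\<And>x. (f has_real_derivative deriv f x) (at x)"
    and "isCont (deriv f) \<alpha>" "f \<alpha> = 0" "deriv f \<alpha> < k"
    and DU: "\<And>z. (U has_real_derivative deriv U z) (at z)"
    and eq: "\<And>z. deriv U z * (k - deriv f (U z)) = m * f (U z)"
    and "U z0 = \<alpha>"
  shows "U z = \<alpha>"
proof -
  define \<kappa> where "\<kappa> = (k - deriv f \<alpha>) / 2"
  define M where "M = \<bar>deriv f \<alpha>\<bar> + \<kappa>"
  have \<kappa>_twice: "2 * \<kappa> = k - deriv f \<alpha>" by (simp add: \<kappa>_def)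
  have "\<kappa> > 0" using \<open>deriv f \<alpha> < k\<close> by (simp add: \<kappa>_def)
  then obtain r where "r > 0" and r: "\<And>x. dist x \<alpha> < r \<Longrightarrow> dist (deriv f x) (deriv f \<alpha>) < \<kappa>"
    using \<open>isCont (deriv f) \<alpha>\<close> unfolding continuous_at_eps_delta by blast
  have near: "\<kappa> \<le> k - deriv f x" "\<bar>deriv f x\<bar> \<le> M" if "x \<in> ball \<alpha> r" for x
  proof -
    have d: "\<bar>deriv f x - deriv f \<alpha>\<bar> < \<kappa>"
      using r[of x] that by (simp add: dist_real_def dist_commute)
    show "\<kappa> \<le> k - deriv f x"
      using d abs_ge_self[of "deriv f x - deriv f \<alpha>"] \<kappa>_twice by linarith
    show "\<bar>deriv f x\<bar> \<le> M"
      using d abs_triangle_ineq2[of "deriv f x" "deriv f \<alpha>"] M_def by linarith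
  qed
  have bound: "\<bar>deriv U z\<bar> \<le> \<bar>m\<bar> * M / \<kappa> * \<bar>U z - \<alpha>\<bar>" if "\<bar>U z - \<alpha>\<bar> < r" for z
  proof -
    have Uz: "U z \<in> ball \<alpha> r"
      using that by (simp add: dist_real_def)
    have "norm (f (U z) - f \<alpha>) \<le> M * norm (U z - \<alpha>)"
      by (rule field_differentiable_bound[OF convex_ball _ _ Uz])
        (use Df near(2) \<open>r > 0\<close> in \<open>auto intro: has_field_derivative_at_within\<close>)
    then have Lip: "\<bar>f (U z)\<bar> \<le> M * \<bar>U z - \<alpha>\<bar>"
      using \<open>f \<alpha> = 0\<close> by simp
    have "\<bar>deriv U z\<bar> * \<kappa> \<le> \<bar>deriv U z\<bar> * (k - deriv f (U z))"
      using near(1)[OF Uz] by (rule mult_left_mono) simp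
    also have "\<dots> = \<bar>deriv U z * (k - deriv f (U z))\<bar>"
      using near(1)[OF Uz] \<open>\<kappa> > 0\<close> by (simp add: abs_mult)
    also have "\<dots> = \<bar>m\<bar> * \<bar>f (U z)\<bar>"
      by (simp add: eq abs_mult)
    also have "\<dots> \<le> \<bar>m\<bar> * (M * \<bar>U z - \<alpha>\<bar>)"
      using Lip by (rule mult_left_mono) simp
    finally show ?thesis using \<open>\<kappa> > 0\<close> by (simp add: field_simps)
  qed
  have "((\<lambda>z. U z - \<alpha>) has_real_derivative deriv U z) (at z)" for z
    using DU[of z] by (auto intro!: derivative_eq_intros)
  from linear_bound_zero_everywhere[OF this _ \<open>r > 0\<close> bound] \<open>U z0 = \<alpha>\<close>
  show ?thesis by simp
qed

lemma tw_speed_critical_imp_deriv_ge: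
  assumes "smooth_fun f" "bistable f \<alpha>" "tw_speed f \<tau> c" "c\<^sup>2 * \<tau> = 1"
  shows "c\<^sup>2 \<le> deriv f \<alpha>"
proof (rule ccontr)
  assume "\<not> c\<^sup>2 \<le> deriv f \<alpha>"
  obtain U V :: "real \<Rightarrow> real" where
    dif: "\<And>z. U differentiable (at z) \<and> V differentiable (at z)" and
    eqU: "\<And>z. - c * deriv U z = deriv V z + f (U z)" and
    eqV: "\<And>z. - c * \<tau> * deriv V z = deriv U z - V z" and
    lim0: "(U \<longlongrightarrow> 0) at_bot" and lim1: "(U \<longlongrightarrow> 1) at_top"
    using \<open>tw_speed f \<tau> c\<close> unfolding tw_speed_def by blast
  have Df: "\<And>x. (f has_real_derivative deriv f x) (at x)"
    using \<open>smooth_fun f\<close> by (rule smooth_fun_has_real_derivative)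
  have DU: "(U has_real_derivative deriv U z) (at z)" for z
    using dif DERIV_deriv_iff_real_differentiable by blast
  have \<alpha>: "0 < \<alpha>" "\<alpha> < 1" "f \<alpha> = 0"
    using \<open>bistable f \<alpha>\<close> by (auto simp: bistable_def)
  obtain p where p: "U p < \<alpha>"
    using order_tendstoD(2)[OF lim0 \<alpha>(1)] by (metis eventually_at_bot_linorder order_refl)
  obtain q where q: "\<alpha> < U q"
    using order_tendstoD(1)[OF lim1 \<alpha>(2)] by (metis eventually_at_top_linorder order_refl)
  have cont: "continuous_on A U" for A
    using DU by (meson DERIV_isCont continuous_at_imp_continuous_on)
  obtain z0 where "U z0 = \<alpha>"
  proof (cases "p \<le> q")
    case True
    then show ?thesis using IVT'[of U p \<alpha> q] p q cont that by fastforce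
  next
    case False
    then show ?thesis using IVT2'[of U p \<alpha> q] p q cont that by fastforce
  qed
  have "deriv f \<alpha> < c\<^sup>2"
    using \<open>\<not> c\<^sup>2 \<le> deriv f \<alpha>\<close> by simp
  from profile_constant_at_regular_equilibrium[OF Df smooth_fun_isCont_deriv[OF \<open>smooth_fun f\<close>]
      \<alpha>(3) this DU tw_profile_critical_speed[OF Df DU eqU eqV \<open>c\<^sup>2 * \<tau> = 1\<close>] \<open>U z0 = \<alpha>\<close>]
  have "U = (\<lambda>z. \<alpha>)" ..
  with lim0 \<alpha>(1) show False by (simp add: tendsto_const_iff)
qed

lemma tau_m_times_deriv_less_1:
  assumes "smooth_fun f" "0 \<le> \<tau>" "\<tau> < tau_m f"
    and "x0 \<in> {0..1}" "deriv f x0 \<noteq> 0" "x \<in> {0..1}"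
  shows "\<tau> * \<bar>deriv f x\<bar> < 1"
proof -
  define s where "s = (SUP y\<in>{0..1}. \<bar>deriv f y\<bar>)"
  have "continuous_on {0..1} (\<lambda>y. \<bar>deriv f y\<bar>)"
    using smooth_fun_isCont_deriv[OF \<open>smooth_fun f\<close>]
    by (intro continuous_at_imp_continuous_on continuous_intros) auto
  then have "bdd_above ((\<lambda>y. \<bar>deriv f y\<bar>) ` {0..1})"
    by (intro bounded_imp_bdd_above compact_imp_bounded compact_continuous_image) auto
  then have le_s: "\<bar>deriv f y\<bar> \<le> s" if "y \<in> {0..1}" for y
    unfolding s_def using cSUP_upper[OF that] by blast
  have "s > 0"
    using le_s[OF \<open>x0 \<in> {0..1}\<close>] \<open>deriv f x0 \<noteq> 0\<close> by linarith
  then have "\<tau> * s < 1"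
    using \<open>\<tau> < tau_m f\<close> unfolding tau_m_def s_def[symmetric] by (simp add: field_simps)
  moreover have "\<tau> * \<bar>deriv f x\<bar> \<le> \<tau> * s"
    using le_s[OF \<open>x \<in> {0..1}\<close>] \<open>0 \<le> \<tau>\<close> by (rule mult_left_mono)
  ultimately show ?thesis by linarith
qed

lemma tw_speed_not_critical:
  assumes "smooth_fun f" "bistable f \<alpha>" "0 < \<tau>" "\<tau> < tau_m f" "tw_speed f \<tau> c"
  shows "c\<^sup>2 * \<tau> \<noteq> 1"
proof
  assume "c\<^sup>2 * \<tau> = 1"
  have "0 < \<alpha>" "\<alpha> < 1" "deriv f 1 \<noteq> 0"
    using \<open>bistable f \<alpha>\<close> by (auto simp: bistable_def)
  then have "\<tau> * \<bar>deriv f \<alpha>\<bar> < 1"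
    using tau_m_times_deriv_less_1[OF \<open>smooth_fun f\<close> _ \<open>\<tau> < tau_m f\<close>, of 1] \<open>0 < \<tau>\<close> by simp
  moreover have "\<tau> * deriv f \<alpha> \<le> \<tau> * \<bar>deriv f \<alpha>\<bar>"
    using \<open>0 < \<tau>\<close> by (intro mult_left_mono) auto
  ultimately have "\<tau> * deriv f \<alpha> < \<tau> * c\<^sup>2"
    using \<open>c\<^sup>2 * \<tau> = 1\<close> by (simp add: algebra_simps)
  with tw_speed_critical_imp_deriv_ge[OF assms(1,2,5) \<open>c\<^sup>2 * \<tau> = 1\<close>] \<open>0 < \<tau>\<close>
  show False by simp
qed

theorem lemma3p12:
  fixes f :: "real \<Rightarrow> real" and \<alpha> \<tau> c :: real
  assumes "smooth_fun f" and "bistable f \<alpha>"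
    and "0 < \<tau>" and "\<tau> < tau_m f"
    and "tw_speed f \<tau> c"
  shows "\<forall>\<xi>::real. \<forall>lam::complex.
     (dispersion \<tau> c (- deriv f 1) \<xi> lam \<or> dispersion \<tau> c (- deriv f 0) \<xi> lam) \<longrightarrow>
     Re lam < - (min (- deriv f 1) (- deriv f 0) / 2) \<and> - (min (- deriv f 1) (- deriv f 0) / 2) < 0"
proof -
  have f': "deriv f 0 < 0" "deriv f 1 < 0"
    using \<open>bistable f \<alpha>\<close> by (auto simp: bistable_def)
  have "c\<^sup>2 * \<tau> \<noteq> 1"
    using tw_speed_not_critical[OF assms] .
  have Re_less: "Re lam < deriv f x / 2"
    if disp: "dispersion \<tau> c (- deriv f x) \<xi> lam" and x: "x = 0 \<or> x = 1" for x \<xi> lam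
  proof -
    have "deriv f x < 0" "\<tau> * \<bar>deriv f x\<bar> < 1"
      using tau_m_times_deriv_less_1[OF \<open>smooth_fun f\<close> _ \<open>\<tau> < tau_m f\<close>, of 1 x] f' x \<open>0 < \<tau>\<close>
      by auto
    then show ?thesis
      using dispersion_Re_less[OF disp \<open>0 < \<tau>\<close> _ _ \<open>c\<^sup>2 * \<tau> \<noteq> 1\<close>] by simp
  qed
  show ?thesis
  proof (intro allI impI conjI)
    fix \<xi> lam
    assume "dispersion \<tau> c (- deriv f 1) \<xi> lam \<or> dispersion \<tau> c (- deriv f 0) \<xi> lam"
    then show "Re lam < - (min (- deriv f 1) (- deriv f 0) / 2)"
      using Re_less[of 1 \<xi> lam] Re_less[of 0 \<xi> lam] by (auto simp: min_def)
  qed (use f' in simp)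
qed

end
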